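(* Let $K$ be an arbitrary valued field, $d\ge1$, and let $C\subseteq K^d$ be the convex hull of a finite set, with $0\in C$. Then there exist a complete flag of $K$-linear subspaces $\{0\}\subsetneq F_1\subsetneq\dots\subsetneq F_d=K^d$ and elements $\gamma_1\le\gamma_2\le\dots\le\gamma_d$ of $\Gamma\cup\{\infty\}$ such that $$C=\{v_1+\dots+v_d:\ v_i\in F_i,\ \nu_{K^d}(v_i)\ge\gamma_i\text{ for all } i\}.$$
   Context: $K$ is a field with valuation $\nu:K\to\Gamma\cup\{\infty\}$, valuation ring $\mathcal{O}$. On $K^d$, $\nu_{K^d}(x_1,\dots,x_d)=\min_i\nu(x_i)$. For $Y\subseteq K^d$, $\operatorname{conv}(Y)=\{\sum_{i=1}^n\alpha_iy_i: n\ge1, y_i\in Y,\alpha_i\in\mathcal{O},\sum_i\alpha_i=1\}$. *)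

theory Defs
  imports "HOL-Analysis.Cartesian_Space"
begin

datatype 'g ext = Fin 'g | Infty

instantiation ext :: (linorder) linorder
begin
fun less_eq_ext :: "'a ext \<Rightarrow> 'a ext \<Rightarrow> bool" where
  "less_eq_ext (Fin a) (Fin b) = (a \<le> b)"
| "less_eq_ext _ Infty = True"
| "less_eq_ext Infty (Fin _) = False"
definition less_ext :: "'a ext \<Rightarrow> 'a ext \<Rightarrow> bool" where
  "less_ext x y = (x \<le> y \<and> \<not> y \<le> x)"
instance
proof
  fix x y z :: "'a ext"
  show "(x < y) = (x \<le> y \<and> \<not> y \<le> x)" by (simp add: less_ext_def)
  show "x \<le> x" by (cases x) auto
  show "x \<le> y \<Longrightarrow> y \<le> z \<Longrightarrow> x \<le> z"
    by (cases x; cases y; cases z) auto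
  show "x \<le> y \<Longrightarrow> y \<le> x \<Longrightarrow> x = y"
    by (cases x; cases y) auto
  show "x \<le> y \<or> y \<le> x" by (cases x; cases y) auto
qed
end

instantiation ext :: (plus) plus
begin
fun plus_ext :: "'a ext \<Rightarrow> 'a ext \<Rightarrow> 'a ext" where
  "plus_ext (Fin a) (Fin b) = Fin (a + b)"
| "plus_ext _ _ = Infty"
instance ..
end

definition valuation :: "('k::field \<Rightarrow> 'g::linordered_ab_group_add ext) \<Rightarrow> bool" where
  "valuation \<nu> \<longleftrightarrow>
     (\<forall>x. \<nu> x = Infty \<longleftrightarrow> x = 0) \<and>
     (\<forall>x y. \<nu> (x * y) = \<nu> x + \<nu> y) \<and>
     (\<forall>x y. min (\<nu> x) (\<nu> y) \<le> \<nu> (x + y))"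

definition val_ring :: "('k::field \<Rightarrow> 'g::linordered_ab_group_add ext) \<Rightarrow> 'k set" where
  "val_ring \<nu> = {a. Fin 0 \<le> \<nu> a}"

definition vec_val :: "('k::field \<Rightarrow> 'g::linordered_ab_group_add ext) \<Rightarrow> 'k ^ 'n::finite \<Rightarrow> 'g ext" where
  "vec_val \<nu> x = Min (range (\<lambda>i. \<nu> (x $ i)))"

definition vconv :: "('k::field \<Rightarrow> 'g::linordered_ab_group_add ext) \<Rightarrow> ('k ^ 'n::finite) set \<Rightarrow> ('k ^ 'n) set" where
  "vconv \<nu> Y = {(\<Sum>i<n. \<alpha> i *s y i) | (n::nat) (\<alpha>::nat \<Rightarrow> 'k) (y::nat \<Rightarrow> 'k ^ 'n). n \<ge> 1 \<and> (\<forall>i<n. y i \<in> Y \<and> \<alpha> i \<in> val_ring \<nu>)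
                     \<and> (\<Sum>i<n. \<alpha> i) = 1}"

end

theory Submission
  imports Defs
begin

text \<open>Write \<open>M\<close> for the \<open>\<O>\<close>-module spanned by \<open>S\<close>; since \<open>0 \<in> C\<close>, the convex hull \<open>C\<close> equals
  \<open>M\<close>, as any \<open>\<O>\<close>-combination can be padded by a multiple of a convex combination equal to \<open>0\<close>.
  To decompose \<open>M\<close>, pick \<open>s \<in> S\<close> of minimal valuation \<open>\<gamma>\<close> and a coordinate \<open>k\<close> where it is
  attained. Then \<open>f = s / s\<^sub>k\<close> has \<open>f\<^sub>k = 1\<close> and valuation \<open>0\<close>, and every element of \<open>M\<close> is
  \<open>a f + w\<close> with \<open>\<nu>(a) \<ge> \<gamma>\<close> and \<open>w\<close> in the module spanned by the reductions \<open>s' - s'\<^sub>k f\<close>,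
  which vanish at \<open>k\<close>. Induction on the number of coordinates gives a basis
  \<open>f\<^sub>1, \<dots>, f\<^sub>d\<close> with \<open>\<nu>(\<Sum> b\<^sub>j f\<^sub>j) = min\<^sub>j \<nu>(b\<^sub>j)\<close> and \<open>\<gamma>\<^sub>1 \<le> \<dots> \<le> \<gamma>\<^sub>d\<close> such that
  \<open>M = {\<Sum> a\<^sub>j f\<^sub>j | \<nu>(a\<^sub>j) \<ge> \<gamma>\<^sub>j}\<close>. The flag is \<open>F\<^sub>i = span(f\<^sub>1, \<dots>, f\<^sub>i)\<close>: by orthonormality,
  \<open>v = \<Sum>\<^sub>j\<^sub>\<le>\<^sub>i b\<^sub>j f\<^sub>j\<close> with \<open>\<nu>(v) \<ge> \<gamma>\<^sub>i\<close> has \<open>\<nu>(b\<^sub>j) \<ge> \<gamma>\<^sub>i \<ge> \<gamma>\<^sub>j\<close> for all \<open>j\<close>.\<close>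

lemma ext_add_Fin0 [simp]:
  fixes x :: "'g::linordered_ab_group_add ext"
  shows "x + Fin 0 = x" and "Fin 0 + x = x"
  by (cases x; simp)+

lemma ext_add_left_mono:
  fixes a b c :: "'g::linordered_ab_group_add ext"
  shows "b \<le> c \<Longrightarrow> a + b \<le> a + c"
  by (cases a; cases b; cases c) auto

lemma ext_le_add_nonneg:
  fixes a c :: "'g::linordered_ab_group_add ext"
  shows "Fin 0 \<le> c \<Longrightarrow> a \<le> a + c"
  using ext_add_left_mono[of "Fin 0" c a] by simp

lemma ext_le_nonneg_add:
  fixes a c :: "'g::linordered_ab_group_add ext"
  shows "Fin 0 \<le> c \<Longrightarrow> a \<le> c + a"
  by (cases a; cases c) auto

lemma ext_Infty_le_iff [simp]: "Infty \<le> (x::'g::linorder ext) \<longleftrightarrow> x = Infty"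
  by (cases x) auto

text \<open>Families are indexed by \<open>{1..m}\<close>; the value of \<open>prepend x f\<close> at \<open>0\<close> is junk.\<close>
definition prepend :: "'a \<Rightarrow> (nat \<Rightarrow> 'a) \<Rightarrow> nat \<Rightarrow> 'a" where
  "prepend x f i = (if i = 1 then x else f (i - 1))"

lemma prepend_1 [simp]: "prepend x f 1 = x" "prepend x f (Suc 0) = x"
  by (simp_all add: prepend_def)

lemma prepend_Suc [simp]: "j \<noteq> 0 \<Longrightarrow> prepend x f (Suc j) = f j"
  by (simp add: prepend_def)

lemma atLeastAtMost_1_Suc: "{1..Suc m} = insert 1 (Suc ` {1..m})"
  by (auto simp: image_iff)

lemma ball_atLeastAtMost_1_Suc:
  "(\<forall>j\<in>{1..Suc m}. P j) \<longleftrightarrow> P 1 \<and> (\<forall>j\<in>{1..m}. P (Suc j))"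
  unfolding atLeastAtMost_1_Suc by (simp del: image_Suc_atLeastAtMost)

lemma image_prepend: "prepend x f ` {1..Suc m} = insert x (f ` {1..m})"
  unfolding atLeastAtMost_1_Suc by (force simp: image_iff simp del: image_Suc_atLeastAtMost)

lemma sum_atLeastAtMost_1_Suc: "(\<Sum>j=1..Suc m. g j) = g 1 + (\<Sum>j=1..m. g (Suc j))"
  by (simp only: sum.atLeast_Suc_atMost[of 1 "Suc m"] sum.shift_bounds_cl_Suc_ivl)

lemma sum_scale_prepend:
  "(\<Sum>j=1..Suc m. b j *s prepend x f j) = b 1 *s x + (\<Sum>j=1..m. b (Suc j) *s f j)"
  unfolding sum_atLeastAtMost_1_Suc by simp

lemma mono_on_prepend:
  fixes \<gamma> :: "nat \<Rightarrow> 'a::order"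
  assumes "mono_on {1..m} \<gamma>" and "\<And>i. i \<in> {1..m} \<Longrightarrow> \<gamma>0 \<le> \<gamma> i"
  shows "mono_on {1..Suc m} (prepend \<gamma>0 \<gamma>)"
proof (rule mono_onI)
  fix i j assume ij: "i \<in> {1..Suc m}" "j \<in> {1..Suc m}" "i \<le> j"
  show "prepend \<gamma>0 \<gamma> i \<le> prepend \<gamma>0 \<gamma> j"
  proof (cases "i = 1")
    case True
    moreover have "j - 1 \<in> {1..m}" if "j \<noteq> 1"
      using ij that by auto
    ultimately show ?thesis
      using assms(2) by (auto simp: prepend_def)
  next
    case False
    then have "i - 1 \<in> {1..m}" "j - 1 \<in> {1..m}" "i - 1 \<le> j - 1" "j \<noteq> 1"
      using ij by auto
    then have "\<gamma> (i - 1) \<le> \<gamma> (j - 1)"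
      using mono_onD[OF assms(1)] by blast
    with False \<open>j \<noteq> 1\<close> show ?thesis
      by (simp add: prepend_def)
  qed
qed

lemma sum_scale_delta:
  assumes "finite A" and "j \<in> A"
  shows "(\<Sum>i\<in>A. (if i = j then 1 else 0) *s f i) = (f j :: 'k::field ^ 'n::finite)"
proof -
  have "(\<Sum>i\<in>A. (if i = j then 1 else 0) *s f i) = (\<Sum>i\<in>A. if i = j then f i else 0)"
    by (rule sum.cong) auto
  with assms show ?thesis by simp
qed

lemma sum_lessThan_append:
  fixes n m :: nat
  shows "(\<Sum>i<n + m. if i < n then g i else h (i - n)) = (\<Sum>i<n. g i) + (\<Sum>i<m. h i :: 'a::comm_monoid_add)"
proof (induction m)
  case 0
  show ?case by (auto intro: sum.cong)
next
  case (Suc m)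
  then show ?case by (simp add: add.assoc)
qed

lemma scaled_sum_append:
  fixes n m :: nat
  shows "(\<Sum>i<n. c i *s y i) + (\<Sum>i<m. d i *s z i) =
    (\<Sum>i<n + m. (if i < n then c i else d (i - n)) *s (if i < n then y i else z (i - n)))"
  by (simp add: sum_lessThan_append[symmetric] if_distrib cong: if_cong)

lemma span_image_eq_sums:
  fixes f :: "'a \<Rightarrow> 'k::field ^ 'n::finite"
  assumes "finite A"
  shows "vec.span (f ` A) = range (\<lambda>b. \<Sum>j\<in>A. b j *s f j)"
proof (rule vec.span_subspace)
  show "f ` A \<subseteq> range (\<lambda>b. \<Sum>j\<in>A. b j *s f j)"
  proof
    fix x assume "x \<in> f ` A"
    then obtain j where "j \<in> A" and "x = f j"
      by blast
    then have "x = (\<Sum>i\<in>A. (if i = j then 1 else 0) *s f i)"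
      using sum_scale_delta[OF assms, of j f] by simp
    then show "x \<in> range (\<lambda>b. \<Sum>j\<in>A. b j *s f j)"
      by (rule range_eqI[where x="\<lambda>i. if i = j then 1 else 0"])
  qed
  show "range (\<lambda>b. \<Sum>j\<in>A. b j *s f j) \<subseteq> vec.span (f ` A)"
    by (auto intro!: vec.span_sum vec.span_scale intro: vec.span_base)
  show "vec.subspace (range (\<lambda>b. \<Sum>j\<in>A. b j *s f j))"
    unfolding vec.subspace_def
  proof (intro conjI ballI allI)
    show "0 \<in> range (\<lambda>b. \<Sum>j\<in>A. b j *s f j)"
      by (rule range_eqI[where x="\<lambda>_. 0"]) simp
    fix x y c
    assume "x \<in> range (\<lambda>b. \<Sum>j\<in>A. b j *s f j)" and "y \<in> range (\<lambda>b. \<Sum>j\<in>A. b j *s f j)"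
    then obtain b1 b2 where x: "x = (\<Sum>j\<in>A. b1 j *s f j)" and y: "y = (\<Sum>j\<in>A. b2 j *s f j)"
      by blast
    have "x + y = (\<Sum>j\<in>A. (b1 j + b2 j) *s f j)"
      by (simp add: x y sum.distrib vec.scale_left_distrib)
    then show "x + y \<in> range (\<lambda>b. \<Sum>j\<in>A. b j *s f j)"
      by (rule range_eqI[where x="\<lambda>j. b1 j + b2 j"])
    have "c *s x = (\<Sum>j\<in>A. (c * b1 j) *s f j)"
      by (simp add: x vec.scale_sum_right)
    then show "c *s x \<in> range (\<lambda>b. \<Sum>j\<in>A. b j *s f j)"
      by (rule range_eqI[where x="\<lambda>j. c * b1 j"])
  qed
qed

section \<open>Coordinate subspaces\<close>

definition supported_vecs :: "'n::finite set \<Rightarrow> ('k::zero ^ 'n) set" where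
  "supported_vecs J = {x. \<forall>j. j \<notin> J \<longrightarrow> x $ j = 0}"

lemma subspace_supported_vecs: "vec.subspace (supported_vecs J)"
  unfolding vec.subspace_def supported_vecs_def by auto

lemma supported_vecs_UNIV [simp]: "supported_vecs UNIV = UNIV"
  by (simp add: supported_vecs_def)

lemma supported_vecs_empty [simp]: "supported_vecs {} = {0}"
  by (auto simp: supported_vecs_def vec_eq_iff)

lemma span_insert_pivot:
  fixes f0 :: "'k::field ^ 'n::finite"
  assumes "k \<in> J" and "f0 \<in> supported_vecs J" and "f0 $ k = 1"
    and "vec.span B = supported_vecs (J - {k})"
  shows "vec.span (insert f0 B) = supported_vecs J"
proof
  have "B \<subseteq> supported_vecs J"
    using vec.span_superset[of B] assms(4) by (auto simp: supported_vecs_def)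
  then show "vec.span (insert f0 B) \<subseteq> supported_vecs J"
    using assms(2) by (intro vec.span_minimal subspace_supported_vecs) auto
  show "supported_vecs J \<subseteq> vec.span (insert f0 B)"
  proof
    fix x :: "'k ^ 'n" assume "x \<in> supported_vecs J"
    then have "x - x $ k *s f0 \<in> vec.span B"
      using assms by (auto simp: supported_vecs_def)
    then show "x \<in> vec.span (insert f0 B)"
      using vec.span_breakdown_eq by blast
  qed
qed

section \<open>\<open>\<O>\<close>-spans\<close>

lemma mem_val_ring_iff [simp]: "c \<in> val_ring \<nu> \<longleftrightarrow> Fin 0 \<le> \<nu> c"
  by (simp add: val_ring_def)

definition val_span ::
    "('k::field \<Rightarrow> 'g::linordered_ab_group_add ext) \<Rightarrow> ('k ^ 'n::finite) set \<Rightarrow> ('k ^ 'n) set" where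
  "val_span \<nu> S = {(\<Sum>i<n. c i *s y i) | (n::nat) c y. \<forall>i<n. y i \<in> S \<and> c i \<in> val_ring \<nu>}"

lemma val_spanE:
  assumes "x \<in> val_span \<nu> S"
  obtains n :: nat and c y where "x = (\<Sum>i<n. c i *s y i)" and "\<And>i. i < n \<Longrightarrow> y i \<in> S \<and> Fin 0 \<le> \<nu> (c i)"
  using assms unfolding val_span_def by auto

lemma val_spanI:
  fixes n :: nat
  shows "(\<And>i. i < n \<Longrightarrow> y i \<in> S \<and> Fin 0 \<le> \<nu> (c i)) \<Longrightarrow> (\<Sum>i<n. c i *s y i) \<in> val_span \<nu> S"
  unfolding val_span_def by auto

lemma val_span_zero: "0 \<in> val_span \<nu> S"
  using val_spanI[where n=0 and \<nu>=\<nu> and S=S] by simp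

lemma val_span_scale_base: "s \<in> S \<Longrightarrow> Fin 0 \<le> \<nu> c \<Longrightarrow> c *s s \<in> val_span \<nu> S"
  using val_spanI[where n=1 and c="\<lambda>_. c" and y="\<lambda>_. s" and \<nu>=\<nu> and S=S] by simp

lemma val_span_add:
  assumes "x \<in> val_span \<nu> S" and "y \<in> val_span \<nu> S"
  shows "x + y \<in> val_span \<nu> S"
proof -
  obtain n :: nat and c u where x: "x = (\<Sum>i<n. c i *s u i)"
    and cu: "\<And>i. i < n \<Longrightarrow> u i \<in> S \<and> Fin 0 \<le> \<nu> (c i)"
    using assms(1) by (blast elim: val_spanE)
  obtain m :: nat and d w where y: "y = (\<Sum>i<m. d i *s w i)"
    and dw: "\<And>i. i < m \<Longrightarrow> w i \<in> S \<and> Fin 0 \<le> \<nu> (d i)"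
    using assms(2) by (blast elim: val_spanE)
  show ?thesis
    unfolding x y scaled_sum_append by (rule val_spanI) (auto simp: cu dw)
qed

lemma val_span_sum: "(\<And>i. i \<in> A \<Longrightarrow> g i \<in> val_span \<nu> S) \<Longrightarrow> sum g A \<in> val_span \<nu> S"
  by (induction A rule: infinite_finite_induct) (auto intro: val_span_zero val_span_add)

lemma val_span_subset_zero:
  assumes "S \<subseteq> {0}"
  shows "val_span \<nu> S = {0}"
proof
  show "val_span \<nu> S \<subseteq> {0}"
  proof
    fix x assume "x \<in> val_span \<nu> S"
    then obtain n :: nat and c y where x: "x = (\<Sum>i<n. c i *s y i)" and "\<And>i. i < n \<Longrightarrow> y i \<in> S"
      by (blast elim: val_spanE)
    then have "\<And>i. i < n \<Longrightarrow> y i = 0"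
      using assms by blast
    then show "x \<in> {0}"
      unfolding x by simp
  qed
  show "{0} \<subseteq> val_span \<nu> S"
    using val_span_zero by blast
qed

lemma val_span_image_linear:
  assumes "Vector_Spaces.linear (*s) (*s) g" and "x \<in> val_span \<nu> S"
  shows "g x \<in> val_span \<nu> (g ` S)"
proof -
  obtain n :: nat and c u where x: "x = (\<Sum>i<n. c i *s u i)"
    and cu: "\<And>i. i < n \<Longrightarrow> u i \<in> S \<and> Fin 0 \<le> \<nu> (c i)"
    using assms(2) by (blast elim: val_spanE)
  have "g x = (\<Sum>i<n. c i *s g (u i))"
    unfolding x using assms(1) by (simp add: vec.linear_sum vec.linear_scale)
  then show ?thesis
    using cu by (auto intro!: val_spanI)
qed

section \<open>Valuations on \<open>K\<close> and \<open>K\<^sup>d\<close>\<close>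

locale valued_field =
  fixes \<nu> :: "'k::field \<Rightarrow> 'g::linordered_ab_group_add ext"
  assumes valuation: "valuation \<nu>"
begin

lemma val_eq_Infty_iff: "\<nu> x = Infty \<longleftrightarrow> x = 0"
  using valuation unfolding valuation_def by blast

lemma val_zero [simp]: "\<nu> 0 = Infty"
  by (simp add: val_eq_Infty_iff)

lemma val_mult: "\<nu> (x * y) = \<nu> x + \<nu> y"
  using valuation unfolding valuation_def by blast

lemma val_add_ge: "min (\<nu> x) (\<nu> y) \<le> \<nu> (x + y)"
  using valuation unfolding valuation_def by blast

lemma val_one [simp]: "\<nu> 1 = Fin 0"
proof -
  obtain g where g: "\<nu> 1 = Fin g"
    using val_eq_Infty_iff by (cases "\<nu> 1") auto
  have "\<nu> 1 = \<nu> 1 + \<nu> 1"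
    using val_mult[of 1 1] by simp
  with g show ?thesis by simp
qed

lemma val_minus_one: "\<nu> (- 1) = Fin 0"
proof -
  obtain g where g: "\<nu> (- 1) = Fin g"
    using val_eq_Infty_iff by (cases "\<nu> (- 1)") auto
  have "\<nu> 1 = \<nu> (- 1) + \<nu> (- 1)"
    using val_mult[of "- 1" "- 1"] by simp
  with g have "g + g = 0" by simp
  then have "g = 0"
    using add_neg_neg[of g g] add_pos_pos[of g g] by (cases g "0::'g" rule: linorder_cases) auto
  with g show ?thesis by simp
qed

lemma val_minus [simp]: "\<nu> (- x) = \<nu> x"
  using val_mult[of "- 1" x] by (simp add: val_minus_one)

lemma val_diff_ge: "min (\<nu> x) (\<nu> y) \<le> \<nu> (x - y)"
  using val_add_ge[of x "- y"] by simp

lemma val_sum_ge: "(\<And>i. i \<in> A \<Longrightarrow> c \<le> \<nu> (g i)) \<Longrightarrow> c \<le> \<nu> (sum g A)"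
proof (induction A rule: infinite_finite_induct)
  case (insert i A)
  then have "c \<le> min (\<nu> (g i)) (\<nu> (sum g A))"
    by simp
  also have "\<dots> \<le> \<nu> (sum g (insert i A))"
    using insert.hyps by (simp add: val_add_ge)
  finally show ?case .
qed simp_all

lemma val_divide_nonneg:
  assumes "\<nu> b \<le> \<nu> a" and "b \<noteq> 0"
  shows "Fin 0 \<le> \<nu> (a / b)"
proof -
  obtain g where g: "\<nu> b = Fin g"
    using assms(2) val_eq_Infty_iff by (cases "\<nu> b") auto
  have "\<nu> a = \<nu> (a / b) + Fin g"
    using val_mult[of "a / b" b] assms(2) g by simp
  with assms(1) g show ?thesis
    by (cases "\<nu> (a / b)") auto
qed

lemma vec_val_ge_iff: "c \<le> vec_val \<nu> x \<longleftrightarrow> (\<forall>i. c \<le> \<nu> (x $ i))"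
  unfolding vec_val_def by (subst Min_ge_iff) auto

lemma vec_val_le: "vec_val \<nu> x \<le> \<nu> (x $ i)"
  using vec_val_ge_iff by blast

lemma vec_val_attained: "\<exists>i. vec_val \<nu> x = \<nu> (x $ i)"
proof -
  have "vec_val \<nu> x \<in> range (\<lambda>i. \<nu> (x $ i))"
    unfolding vec_val_def by (rule Min_in) auto
  then show ?thesis by auto
qed

lemma vec_val_eq_Infty_iff: "vec_val \<nu> x = Infty \<longleftrightarrow> x = 0"
  using vec_val_ge_iff[of Infty x] by (simp add: val_eq_Infty_iff vec_eq_iff)

lemma vec_val_zero [simp]: "vec_val \<nu> 0 = Infty"
  by (simp add: vec_val_eq_Infty_iff)

lemma vec_val_add_ge: "min (vec_val \<nu> x) (vec_val \<nu> y) \<le> vec_val \<nu> (x + y)"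
proof (unfold vec_val_ge_iff, intro allI)
  fix i
  have "min (vec_val \<nu> x) (vec_val \<nu> y) \<le> min (\<nu> (x $ i)) (\<nu> (y $ i))"
    by (intro min.mono vec_val_le)
  also have "\<dots> \<le> \<nu> ((x + y) $ i)"
    by (simp add: val_add_ge)
  finally show "min (vec_val \<nu> x) (vec_val \<nu> y) \<le> \<nu> ((x + y) $ i)" .
qed

lemma vec_val_minus [simp]: "vec_val \<nu> (- x) = vec_val \<nu> x"
  by (simp add: vec_val_def)

lemma vec_val_diff_ge: "min (vec_val \<nu> x) (vec_val \<nu> y) \<le> vec_val \<nu> (x - y)"
  using vec_val_add_ge[of x "- y"] by simp

lemma vec_val_scale: "vec_val \<nu> (a *s x) = \<nu> a + vec_val \<nu> x"
proof (rule antisym)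
  obtain i where i: "vec_val \<nu> x = \<nu> (x $ i)"
    using vec_val_attained by blast
  show "vec_val \<nu> (a *s x) \<le> \<nu> a + vec_val \<nu> x"
    using vec_val_le[of "a *s x" i] i by (simp add: val_mult)
  show "\<nu> a + vec_val \<nu> x \<le> vec_val \<nu> (a *s x)"
    unfolding vec_val_ge_iff by (simp add: val_mult ext_add_left_mono vec_val_le)
qed

lemma vec_val_sum_ge: "(\<And>i. i \<in> A \<Longrightarrow> c \<le> vec_val \<nu> (g i)) \<Longrightarrow> c \<le> vec_val \<nu> (sum g A)"
  unfolding vec_val_ge_iff sum_component by (blast intro: val_sum_ge)

lemma val_span_base: "S \<subseteq> val_span \<nu> S"
  using val_span_scale_base[where c=1 and S=S and \<nu>=\<nu>] by auto

lemma val_span_scale: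
  assumes "x \<in> val_span \<nu> S" and "Fin 0 \<le> \<nu> a"
  shows "a *s x \<in> val_span \<nu> S"
proof -
  obtain n :: nat and c u where x: "x = (\<Sum>i<n. c i *s u i)"
    and cu: "\<And>i. i < n \<Longrightarrow> u i \<in> S \<and> Fin 0 \<le> \<nu> (c i)"
    using assms(1) by (blast elim: val_spanE)
  have "Fin 0 \<le> \<nu> (a * c i)" if "i < n" for i
    using order_trans[OF assms(2) ext_le_add_nonneg[OF conjunct2[OF cu[OF that]]]]
    by (simp add: val_mult)
  then have "(\<Sum>i<n. (a * c i) *s u i) \<in> val_span \<nu> S"
    using cu by (auto intro: val_spanI)
  then show ?thesis
    unfolding x by (simp add: vec.scale_sum_right)
qed

lemma val_span_subset: "A \<subseteq> val_span \<nu> B \<Longrightarrow> val_span \<nu> A \<subseteq> val_span \<nu> B"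
  by (auto elim!: val_spanE intro!: val_span_sum val_span_scale)

lemma vconv_eq_val_span:
  assumes "0 \<in> vconv \<nu> S"
  shows "vconv \<nu> S = val_span \<nu> S"
proof
  show "vconv \<nu> S \<subseteq> val_span \<nu> S"
    unfolding vconv_def val_span_def by blast
  obtain m :: nat and \<alpha> z where zero: "0 = (\<Sum>i<m. \<alpha> i *s z i)" and "m \<ge> 1"
    and \<alpha>z: "\<forall>i<m. z i \<in> S \<and> Fin 0 \<le> \<nu> (\<alpha> i)" and \<alpha>1: "(\<Sum>i<m. \<alpha> i) = 1"
    using assms unfolding vconv_def by auto
  show "val_span \<nu> S \<subseteq> vconv \<nu> S"
  proof
    fix x assume "x \<in> val_span \<nu> S"
    then obtain n :: nat and c u where x: "x = (\<Sum>i<n. c i *s u i)"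
      and cu: "\<And>i. i < n \<Longrightarrow> u i \<in> S \<and> Fin 0 \<le> \<nu> (c i)"
      by (blast elim: val_spanE)
    define t where "t = 1 - (\<Sum>i<n. c i)"
    have "Fin 0 \<le> \<nu> (\<Sum>i<n. c i)"
      by (rule val_sum_ge) (simp add: cu)
    then have t: "Fin 0 \<le> \<nu> t"
      using val_diff_ge[of 1 "\<Sum>i<n. c i"] unfolding t_def by simp
    text \<open>Pad \<open>x\<close> with \<open>t\<close> times the given representation of \<open>0\<close> to make the coefficients sum to \<open>1\<close>.\<close>
    define c' where "c' i = (if i < n then c i else t * \<alpha> (i - n))" for i
    define u' where "u' i = (if i < n then u i else z (i - n))" for i
    have "x = x + t *s (\<Sum>i<m. \<alpha> i *s z i)"
      unfolding zero[symmetric] by simp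
    also have "\<dots> = (\<Sum>i<n. c i *s u i) + (\<Sum>i<m. (t * \<alpha> i) *s z i)"
      by (simp add: x vec.scale_sum_right)
    also have "\<dots> = (\<Sum>i<n + m. c' i *s u' i)"
      unfolding c'_def u'_def by (rule scaled_sum_append)
    finally have "x = (\<Sum>i<n + m. c' i *s u' i)" .
    moreover have "(\<Sum>i<n + m. c' i) = 1"
      using sum_lessThan_append[where n=n and m=m and g=c and h="\<lambda>i. t * \<alpha> i"]
      by (simp add: c'_def sum_distrib_left[symmetric] \<alpha>1 t_def)
    moreover have "\<forall>i<n + m. u' i \<in> S \<and> c' i \<in> val_ring \<nu>"
      using cu \<alpha>z t order_trans[OF t ext_le_add_nonneg]
      by (auto simp: c'_def u'_def val_mult)
    ultimately show "x \<in> vconv \<nu> S"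
      unfolding vconv_def using \<open>m \<ge> 1\<close>
      by (intro CollectI exI[of _ "n + m"] exI[of _ c'] exI[of _ u']) simp
  qed
qed

end

section \<open>Pivots\<close>

text \<open>Inserting \<open>Infty\<close> makes the minimum total: it is \<open>Infty\<close> iff \<open>S \<subseteq> {0}\<close>.\<close>
definition min_val ::
    "('k::field \<Rightarrow> 'g::linordered_ab_group_add ext) \<Rightarrow> ('k ^ 'n::finite) set \<Rightarrow> 'g ext" where
  "min_val \<nu> S = Min (insert Infty (vec_val \<nu> ` S))"

context valued_field
begin

lemma le_min_val_iff: "finite S \<Longrightarrow> c \<le> min_val \<nu> S \<longleftrightarrow> (\<forall>s\<in>S. c \<le> vec_val \<nu> s)"
  unfolding min_val_def by (subst Min_ge_iff) auto

lemma min_val_le: "finite S \<Longrightarrow> s \<in> S \<Longrightarrow> min_val \<nu> S \<le> vec_val \<nu> s"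
  using le_min_val_iff by blast

lemma val_span_lower_bound:
  assumes "finite S" and "x \<in> val_span \<nu> S"
  shows "min_val \<nu> S \<le> vec_val \<nu> x"
proof -
  obtain n :: nat and c u where x: "x = (\<Sum>i<n. c i *s u i)"
    and cu: "\<And>i. i < n \<Longrightarrow> u i \<in> S \<and> Fin 0 \<le> \<nu> (c i)"
    using assms(2) by (blast elim: val_spanE)
  have term_bound: "min_val \<nu> S \<le> vec_val \<nu> (c i *s u i)" if "i < n" for i
    using order_trans[OF min_val_le[OF assms(1)] ext_le_nonneg_add] cu[OF that]
    by (simp add: vec_val_scale)
  show ?thesis
    unfolding x by (rule vec_val_sum_ge) (simp add: term_bound)
qed

lemma min_val_mono_val_span:
  "finite S \<Longrightarrow> finite T \<Longrightarrow> T \<subseteq> val_span \<nu> S \<Longrightarrow> min_val \<nu> S \<le> min_val \<nu> T"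
  using val_span_lower_bound by (auto simp: le_min_val_iff)

lemma obtain_pivot:
  fixes S :: "('k ^ 'n::finite) set"
  assumes "finite S" and "S \<subseteq> supported_vecs J" and "J \<noteq> {}"
  obtains k f0 where "k \<in> J" and "f0 \<in> supported_vecs J" and "f0 $ k = 1"
    and "vec_val \<nu> f0 = Fin 0" and "\<And>a. min_val \<nu> S \<le> \<nu> a \<Longrightarrow> a *s f0 \<in> val_span \<nu> S"
proof (cases "min_val \<nu> S = Infty")
  case True
  obtain k :: 'n where k: "k \<in> J"
    using assms(3) by blast
  define e :: "'k ^ 'n" where "e = (\<chi> j. if j = k then 1 else 0)"
  have "vec_val \<nu> e \<le> Fin 0"
    using vec_val_le[of e k] by (simp add: e_def)
  moreover have "Fin 0 \<le> vec_val \<nu> e"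
    by (simp add: vec_val_ge_iff e_def)
  ultimately have "vec_val \<nu> e = Fin 0"
    by simp
  moreover have "a *s e \<in> val_span \<nu> S" if "min_val \<nu> S \<le> \<nu> a" for a
    using that True val_span_zero by (simp add: val_eq_Infty_iff)
  ultimately show thesis
    using k by (intro that[of k e]) (auto simp: e_def supported_vecs_def)
next
  case False
  then have "min_val \<nu> S \<in> vec_val \<nu> ` S"
    using Min_in[of "insert Infty (vec_val \<nu> ` S)"] assms(1) unfolding min_val_def by auto
  then obtain s0 where s0: "s0 \<in> S" "vec_val \<nu> s0 = min_val \<nu> S"
    by (metis imageE)
  obtain k where k: "vec_val \<nu> s0 = \<nu> (s0 $ k)"
    using vec_val_attained by blast
  have s0k: "s0 $ k \<noteq> 0"
    using False s0(2) k by (metis val_zero)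
  then have "k \<in> J"
    using s0(1) assms(2) by (auto simp: supported_vecs_def)
  define f0 where "f0 = inverse (s0 $ k) *s s0"
  have "f0 \<in> supported_vecs J"
    using s0(1) assms(2) by (auto simp: supported_vecs_def f0_def)
  moreover have "f0 $ k = 1"
    using s0k by (simp add: f0_def)
  moreover have "vec_val \<nu> f0 = Fin 0"
    using val_mult[of "inverse (s0 $ k)" "s0 $ k"] s0k by (simp add: f0_def vec_val_scale k)
  moreover have "a *s f0 \<in> val_span \<nu> S" if "min_val \<nu> S \<le> \<nu> a" for a
  proof -
    have "Fin 0 \<le> \<nu> (a / s0 $ k)"
      using that s0(2) k s0k by (intro val_divide_nonneg) auto
    then have "(a / s0 $ k) *s s0 \<in> val_span \<nu> S"
      using s0(1) by (rule val_span_scale_base[rotated])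
    then show ?thesis
      by (simp add: f0_def divide_inverse)
  qed
  ultimately show thesis
    using that \<open>k \<in> J\<close> by blast
qed

lemma pivot_reduction_in_val_span:
  assumes "finite S" and "s \<in> S"
    and pivot: "\<And>a. min_val \<nu> S \<le> \<nu> a \<Longrightarrow> a *s f0 \<in> val_span \<nu> S"
  shows "s - s $ k *s f0 \<in> val_span \<nu> S"
proof -
  have "min_val \<nu> S \<le> \<nu> (- (s $ k))"
    using order_trans[OF min_val_le[OF assms(1,2)] vec_val_le] by simp
  then have "s + (- (s $ k)) *s f0 \<in> val_span \<nu> S"
    using assms(2) val_span_base by (blast intro: val_span_add pivot)
  then show ?thesis
    by (simp add: vec_eq_iff)
qed

lemma val_span_pivot_decomp:
  fixes f0 :: "'k ^ 'n::finite" and k :: 'n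
  defines "p \<equiv> \<lambda>s. s - s $ k *s f0"
  assumes "finite S"
    and pivot: "\<And>a. min_val \<nu> S \<le> \<nu> a \<Longrightarrow> a *s f0 \<in> val_span \<nu> S"
  shows "val_span \<nu> S = {a *s f0 + w | a w. min_val \<nu> S \<le> \<nu> a \<and> w \<in> val_span \<nu> (p ` S)}"
proof
  have "Vector_Spaces.linear (*s) (*s) p"
    unfolding Vector_Spaces.linear_iff p_def using vec.vector_space_axioms
    by (auto simp: vec_eq_iff algebra_simps)
  then have "p x \<in> val_span \<nu> (p ` S)" if "x \<in> val_span \<nu> S" for x
    using that by (rule val_span_image_linear)
  moreover have "min_val \<nu> S \<le> \<nu> (x $ k)" if "x \<in> val_span \<nu> S" for x
    using val_span_lower_bound[OF assms(2) that] vec_val_le order_trans by blast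
  moreover have "x = x $ k *s f0 + p x" for x
    by (simp add: p_def)
  ultimately show "val_span \<nu> S \<subseteq> {a *s f0 + w | a w. min_val \<nu> S \<le> \<nu> a \<and> w \<in> val_span \<nu> (p ` S)}"
    by blast
  have "p ` S \<subseteq> val_span \<nu> S"
    using pivot_reduction_in_val_span[OF assms(2) _ pivot] by (auto simp: p_def)
  then have reductions: "val_span \<nu> (p ` S) \<subseteq> val_span \<nu> S"
    by (rule val_span_subset)
  show "{a *s f0 + w | a w. min_val \<nu> S \<le> \<nu> a \<and> w \<in> val_span \<nu> (p ` S)} \<subseteq> val_span \<nu> S"
  proof
    fix x assume "x \<in> {a *s f0 + w | a w. min_val \<nu> S \<le> \<nu> a \<and> w \<in> val_span \<nu> (p ` S)}"
    then obtain a w where "x = a *s f0 + w" "min_val \<nu> S \<le> \<nu> a" "w \<in> val_span \<nu> (p ` S)"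
      by blast
    then show "x \<in> val_span \<nu> S"
      using reductions pivot by (auto intro: val_span_add)
  qed
qed

end

section \<open>Orthonormal bases\<close>

text \<open>This says \<open>\<nu>(\<Sum> b\<^sub>j f\<^sub>j) = min\<^sub>j \<nu>(b\<^sub>j)\<close>, phrased via lower bounds so that
  it also makes sense for \<open>m = 0\<close>.\<close>
definition val_orthonormal ::
    "('k::field \<Rightarrow> 'g::linordered_ab_group_add ext) \<Rightarrow> nat \<Rightarrow> (nat \<Rightarrow> 'k ^ 'n::finite) \<Rightarrow> bool" where
  "val_orthonormal \<nu> m f \<longleftrightarrow>
     (\<forall>b c. c \<le> vec_val \<nu> (\<Sum>j=1..m. b j *s f j) \<longleftrightarrow> (\<forall>j\<in>{1..m}. c \<le> \<nu> (b j)))"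

definition graded_span ::
    "('k::field \<Rightarrow> 'g::linordered_ab_group_add ext) \<Rightarrow> nat \<Rightarrow> (nat \<Rightarrow> 'k ^ 'n::finite)
      \<Rightarrow> (nat \<Rightarrow> 'g ext) \<Rightarrow> ('k ^ 'n) set" where
  "graded_span \<nu> m f \<gamma> = {(\<Sum>j=1..m. a j *s f j) | a. \<forall>j\<in>{1..m}. \<gamma> j \<le> \<nu> (a j)}"

lemma graded_spanI:
  "(\<And>j. j \<in> {1..m} \<Longrightarrow> \<gamma> j \<le> \<nu> (a j)) \<Longrightarrow> (\<Sum>j=1..m. a j *s f j) \<in> graded_span \<nu> m f \<gamma>"
  unfolding graded_span_def by blast

lemma graded_span_prepend:
  "graded_span \<nu> (Suc m) (prepend f0 f) (prepend \<gamma>0 \<gamma>) =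
   {a *s f0 + w | a w. \<gamma>0 \<le> \<nu> a \<and> w \<in> graded_span \<nu> m f \<gamma>}"
  (is "?L = ?R")
proof
  show "?L \<subseteq> ?R"
  proof
    fix x assume "x \<in> ?L"
    then obtain a where x: "x = (\<Sum>j=1..Suc m. a j *s prepend f0 f j)"
      and a: "\<forall>j\<in>{1..Suc m}. prepend \<gamma>0 \<gamma> j \<le> \<nu> (a j)"
      unfolding graded_span_def by blast
    have "\<gamma> j \<le> \<nu> (a (Suc j))" if "j \<in> {1..m}" for j
      using a[rule_format, of "Suc j"] that by simp
    then have "(\<Sum>j=1..m. a (Suc j) *s f j) \<in> graded_span \<nu> m f \<gamma>"
      by (rule graded_spanI)
    moreover have "\<gamma>0 \<le> \<nu> (a 1)"
      using a[rule_format, of 1] by simp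
    ultimately show "x \<in> ?R"
      unfolding x sum_scale_prepend by blast
  qed
  show "?R \<subseteq> ?L"
  proof
    fix x assume "x \<in> ?R"
    then obtain a b where x: "x = a *s f0 + (\<Sum>j=1..m. b j *s f j)"
      and "\<gamma>0 \<le> \<nu> a" and "\<forall>j\<in>{1..m}. \<gamma> j \<le> \<nu> (b j)"
      unfolding graded_span_def by blast
    then have "\<forall>j\<in>{1..Suc m}. prepend \<gamma>0 \<gamma> j \<le> \<nu> (prepend a b j)"
      unfolding ball_atLeastAtMost_1_Suc by simp
    then have "(\<Sum>j=1..Suc m. prepend a b j *s prepend f0 f j) \<in> ?L"
      by (intro graded_spanI) blast
    moreover have "x = (\<Sum>j=1..Suc m. prepend a b j *s prepend f0 f j)"
      unfolding x sum_scale_prepend by simp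
    ultimately show "x \<in> ?L"
      by (simp only:)
  qed
qed

context valued_field
begin

lemma val_orthonormal_le_coeff:
  "val_orthonormal \<nu> m f \<Longrightarrow> j \<in> {1..m} \<Longrightarrow> vec_val \<nu> (\<Sum>i=1..m. b i *s f i) \<le> \<nu> (b j)"
  unfolding val_orthonormal_def by blast

lemma val_orthonormal_nonneg:
  assumes "val_orthonormal \<nu> m f" and "j \<in> {1..m}"
  shows "Fin 0 \<le> vec_val \<nu> (f j)"
proof -
  have "Fin 0 \<le> vec_val \<nu> (\<Sum>i=1..m. (if i = j then 1 else 0) *s f i)"
    using assms(1) unfolding val_orthonormal_def by simp
  then show ?thesis
    using sum_scale_delta[of "{1..m}" j f] assms(2) by simp
qed

lemma val_orthonormal_not_in_span:
  assumes orth: "val_orthonormal \<nu> m f" and j: "j \<in> {1..m}"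
  shows "f j \<notin> vec.span (f ` ({1..m} - {j}))"
proof
  assume "f j \<in> vec.span (f ` ({1..m} - {j}))"
  then obtain b where b: "f j = (\<Sum>i\<in>{1..m} - {j}. b i *s f i)"
    by (auto simp: span_image_eq_sums)
  text \<open>A nontrivial relation \<open>\<Sum> b' i f i = 0\<close> contradicts \<open>\<nu>(0) = \<infinity>\<close>.\<close>
  define b' where "b' = b(j := - 1)"
  have "(\<Sum>i=1..m. b' i *s f i) = b' j *s f j + (\<Sum>i\<in>{1..m} - {j}. b' i *s f i)"
    using j by (simp add: sum.remove)
  also have "\<dots> = 0"
    using b by (simp add: b'_def)
  finally have "Infty \<le> vec_val \<nu> (\<Sum>i=1..m. b' i *s f i)"
    by simp
  then have "Infty \<le> \<nu> (b' j)"
    using orth j unfolding val_orthonormal_def by blast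
  then show False
    by (simp add: b'_def val_eq_Infty_iff)
qed

lemma val_orthonormal_span_psubset:
  assumes "val_orthonormal \<nu> m f" and "i < m"
  shows "vec.span (f ` {1..i}) \<subset> vec.span (f ` {1..Suc i})"
proof -
  have "vec.span (f ` {1..i}) \<subseteq> vec.span (f ` ({1..m} - {Suc i}))"
    using assms(2) by (intro vec.span_mono image_mono) auto
  then have "f (Suc i) \<notin> vec.span (f ` {1..i})"
    using val_orthonormal_not_in_span[OF assms(1), of "Suc i"] assms(2) by auto
  moreover have "f (Suc i) \<in> vec.span (f ` {1..Suc i})"
    by (simp add: vec.span_base)
  moreover have "vec.span (f ` {1..i}) \<subseteq> vec.span (f ` {1..Suc i})"
    by (intro vec.span_mono image_mono) auto
  ultimately show ?thesis
    by blast
qed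

lemma vec_val_pivot_sum_le:
  assumes "f0 $ k = 1" and "vec_val \<nu> f0 = Fin 0" and "w $ k = 0"
  shows "vec_val \<nu> (a *s f0 + w) \<le> vec_val \<nu> w"
proof -
  let ?x = "a *s f0 + w"
  have "vec_val \<nu> ?x \<le> \<nu> a + vec_val \<nu> f0"
    using vec_val_le[of ?x k] assms by simp
  moreover have "min (vec_val \<nu> ?x) (vec_val \<nu> (a *s f0)) \<le> vec_val \<nu> (?x - a *s f0)"
    by (rule vec_val_diff_ge)
  ultimately show ?thesis
    by (simp add: vec_val_scale min_absorb1)
qed

lemma val_orthonormal_prepend:
  assumes orth: "val_orthonormal \<nu> m f" and "f0 $ k = 1" and "vec_val \<nu> f0 = Fin 0"
    and "\<And>j. j \<in> {1..m} \<Longrightarrow> f j $ k = 0"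
  shows "val_orthonormal \<nu> (Suc m) (prepend f0 f)"
  unfolding val_orthonormal_def
proof (intro allI)
  fix b :: "nat \<Rightarrow> 'k" and c
  define w where "w = (\<Sum>j=1..m. b (Suc j) *s f j)"
  have "w $ k = 0"
    using assms(4) by (simp add: w_def sum_component)
  have w: "c \<le> vec_val \<nu> w \<longleftrightarrow> (\<forall>j\<in>{1..m}. c \<le> \<nu> (b (Suc j)))"
    using orth unfolding val_orthonormal_def w_def by simp
  have "c \<le> vec_val \<nu> (b 1 *s f0 + w) \<longleftrightarrow> c \<le> \<nu> (b 1) \<and> c \<le> vec_val \<nu> w"
  proof
    assume c: "c \<le> vec_val \<nu> (b 1 *s f0 + w)"
    have "vec_val \<nu> (b 1 *s f0 + w) \<le> \<nu> (b 1)"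
      using vec_val_le[of "b 1 *s f0 + w" k] assms(2) \<open>w $ k = 0\<close> by simp
    moreover have "vec_val \<nu> (b 1 *s f0 + w) \<le> vec_val \<nu> w"
      using assms(2,3) \<open>w $ k = 0\<close> by (rule vec_val_pivot_sum_le)
    ultimately show "c \<le> \<nu> (b 1) \<and> c \<le> vec_val \<nu> w"
      using c by auto
  next
    assume "c \<le> \<nu> (b 1) \<and> c \<le> vec_val \<nu> w"
    then have "c \<le> min (vec_val \<nu> (b 1 *s f0)) (vec_val \<nu> w)"
      using assms(3) by (simp add: vec_val_scale)
    also have "\<dots> \<le> vec_val \<nu> (b 1 *s f0 + w)"
      by (rule vec_val_add_ge)
    finally show "c \<le> vec_val \<nu> (b 1 *s f0 + w)" .
  qed
  then show "c \<le> vec_val \<nu> (\<Sum>j=1..Suc m. b j *s prepend f0 f j) \<longleftrightarrow> (\<forall>j\<in>{1..Suc m}. c \<le> \<nu> (b j))"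
    unfolding sum_scale_prepend w_def[symmetric] ball_atLeastAtMost_1_Suc w by blast
qed

lemma graded_span_zero: "0 \<in> graded_span \<nu> m f \<gamma>"
  using graded_spanI[where a="\<lambda>_. 0" and \<nu>=\<nu> and \<gamma>=\<gamma> and f=f and m=m] by simp

lemma graded_span_add:
  assumes "x \<in> graded_span \<nu> m f \<gamma>" and "y \<in> graded_span \<nu> m f \<gamma>"
  shows "x + y \<in> graded_span \<nu> m f \<gamma>"
proof -
  obtain a b where x: "x = (\<Sum>j=1..m. a j *s f j)" and a: "\<forall>j\<in>{1..m}. \<gamma> j \<le> \<nu> (a j)"
    and y: "y = (\<Sum>j=1..m. b j *s f j)" and b: "\<forall>j\<in>{1..m}. \<gamma> j \<le> \<nu> (b j)"
    using assms unfolding graded_span_def by blast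
  have "\<gamma> j \<le> \<nu> (a j + b j)" if "j \<in> {1..m}" for j
    using a b that order_trans[OF _ val_add_ge] by (simp add: min.boundedI)
  then have "(\<Sum>j=1..m. (a j + b j) *s f j) \<in> graded_span \<nu> m f \<gamma>"
    by (rule graded_spanI)
  then show ?thesis
    by (simp add: x y sum.distrib vec.scale_left_distrib)
qed

lemma graded_span_sum:
  "(\<And>i. i \<in> A \<Longrightarrow> g i \<in> graded_span \<nu> m f \<gamma>) \<Longrightarrow> sum g A \<in> graded_span \<nu> m f \<gamma>"
  by (induction A rule: infinite_finite_induct) (auto intro: graded_span_zero graded_span_add)

lemma graded_span_eq_flag_sums:
  assumes orth: "val_orthonormal \<nu> m f" and mono: "mono_on {1..m} \<gamma>"
  shows "graded_span \<nu> m f \<gamma> =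
    {(\<Sum>i=1..m. v i) | v. \<forall>i\<in>{1..m}. v i \<in> vec.span (f ` {1..i}) \<and> \<gamma> i \<le> vec_val \<nu> (v i)}"
  (is "_ = ?R")
proof
  show "graded_span \<nu> m f \<gamma> \<subseteq> ?R"
  proof
    fix x assume "x \<in> graded_span \<nu> m f \<gamma>"
    then obtain a where x: "x = (\<Sum>i=1..m. a i *s f i)" and a: "\<forall>i\<in>{1..m}. \<gamma> i \<le> \<nu> (a i)"
      unfolding graded_span_def by blast
    have "a i *s f i \<in> vec.span (f ` {1..i})" if "i \<in> {1..m}" for i
      using that by (intro vec.span_scale vec.span_base) auto
    moreover have "\<gamma> i \<le> vec_val \<nu> (a i *s f i)" if "i \<in> {1..m}" for i
      using a that order_trans[OF _ ext_le_add_nonneg[OF val_orthonormal_nonneg[OF orth that]]]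
      by (simp add: vec_val_scale)
    ultimately show "x \<in> ?R"
      unfolding x by blast
  qed
  show "?R \<subseteq> graded_span \<nu> m f \<gamma>"
  proof
    fix x assume "x \<in> ?R"
    then obtain v where x: "x = (\<Sum>i=1..m. v i)"
      and v: "\<forall>i\<in>{1..m}. v i \<in> vec.span (f ` {1..i}) \<and> \<gamma> i \<le> vec_val \<nu> (v i)"
      by blast
    have "v i \<in> graded_span \<nu> m f \<gamma>" if i: "i \<in> {1..m}" for i
    proof -
      have "v i \<in> range (\<lambda>b. \<Sum>j=1..i. b j *s f j)"
        using v i span_image_eq_sums[of "{1..i}" f] by auto
      then obtain b where b: "v i = (\<Sum>j=1..i. b j *s f j)"
        by blast
      define a where "a j = (if j \<le> i then b j else 0)" for j
      have vi: "v i = (\<Sum>j=1..m. a j *s f j)"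
        unfolding b a_def using i by (intro sum.mono_neutral_cong_left) auto
      have "\<gamma> j \<le> \<nu> (a j)" if j: "j \<in> {1..m}" for j
      proof (cases "j \<le> i")
        case True
        have "\<gamma> j \<le> \<gamma> i"
          using mono i j True by (auto intro: mono_onD)
        also have "\<dots> \<le> vec_val \<nu> (v i)"
          using v i by blast
        also have "\<dots> \<le> \<nu> (a j)"
          unfolding vi using orth j by (rule val_orthonormal_le_coeff)
        finally show ?thesis .
      qed (simp add: a_def)
      then show ?thesis
        unfolding vi by (rule graded_spanI)
    qed
    then show "x \<in> graded_span \<nu> m f \<gamma>"
      unfolding x by (rule graded_span_sum)
  qed
qed

lemma val_span_orthonormal_basis:
  fixes S :: "('k ^ 'n::finite) set"
  assumes "finite S" and "S \<subseteq> supported_vecs J" and "card J = m"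
  shows "\<exists>f \<gamma>. vec.span (f ` {1..m}) = supported_vecs J \<and> val_orthonormal \<nu> m f \<and>
    mono_on {1..m} \<gamma> \<and> (\<forall>i\<in>{1..m}. min_val \<nu> S \<le> \<gamma> i) \<and> val_span \<nu> S = graded_span \<nu> m f \<gamma>"
  using assms
proof (induction m arbitrary: J S)
  case 0
  then have "val_span \<nu> S = {0}"
    by (intro val_span_subset_zero) (simp add: card_eq_0_iff)
  moreover have "val_orthonormal \<nu> 0 f" for f
    by (simp add: val_orthonormal_def)
  ultimately show ?case
    using 0 by (auto simp: card_eq_0_iff graded_span_def)
next
  case (Suc m)
  then have "J \<noteq> {}"
    by auto
  obtain k and f0 :: "'k ^ 'n" where "k \<in> J" and f0: "f0 \<in> supported_vecs J" "f0 $ k = 1" "vec_val \<nu> f0 = Fin 0"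
    and pivot: "\<And>a. min_val \<nu> S \<le> \<nu> a \<Longrightarrow> a *s f0 \<in> val_span \<nu> S"
    using obtain_pivot[OF Suc.prems(1,2) \<open>J \<noteq> {}\<close>] by blast
  define p where "p s = s - s $ k *s f0" for s
  have "p ` S \<subseteq> supported_vecs (J - {k})"
    using Suc.prems(2) f0(1,2) by (auto simp: p_def supported_vecs_def)
  moreover have "card (J - {k}) = m"
    using Suc.prems(3) \<open>k \<in> J\<close> by simp
  ultimately obtain f \<gamma> where span: "vec.span (f ` {1..m}) = supported_vecs (J - {k})"
    and orth: "val_orthonormal \<nu> m f" and mono: "mono_on {1..m} \<gamma>"
    and bound: "\<forall>i\<in>{1..m}. min_val \<nu> (p ` S) \<le> \<gamma> i"
    and graded: "val_span \<nu> (p ` S) = graded_span \<nu> m f \<gamma>"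
    using Suc.IH[of "p ` S" "J - {k}"] Suc.prems(1) by blast
  have "min_val \<nu> S \<le> min_val \<nu> (p ` S)"
    using pivot_reduction_in_val_span[OF Suc.prems(1) _ pivot] Suc.prems(1)
    by (intro min_val_mono_val_span) (auto simp: p_def)
  then have bound': "\<And>i. i \<in> {1..m} \<Longrightarrow> min_val \<nu> S \<le> \<gamma> i"
    using bound order_trans by blast
  have "f j $ k = 0" if "j \<in> {1..m}" for j
    using vec.span_base[of "f j" "f ` {1..m}"] that span by (auto simp: supported_vecs_def)
  then have "val_orthonormal \<nu> (Suc m) (prepend f0 f)"
    using orth f0(2,3) by (intro val_orthonormal_prepend)
  moreover have "vec.span (prepend f0 f ` {1..Suc m}) = supported_vecs J"
    unfolding image_prepend using \<open>k \<in> J\<close> f0(1,2) span by (rule span_insert_pivot)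
  moreover have "mono_on {1..Suc m} (prepend (min_val \<nu> S) \<gamma>)"
    using mono bound' by (rule mono_on_prepend)
  moreover have "\<forall>i\<in>{1..Suc m}. min_val \<nu> S \<le> prepend (min_val \<nu> S) \<gamma> i"
    unfolding ball_atLeastAtMost_1_Suc using bound' by simp
  moreover have "val_span \<nu> S = graded_span \<nu> (Suc m) (prepend f0 f) (prepend (min_val \<nu> S) \<gamma>)"
    unfolding graded_span_prepend graded[symmetric] p_def[abs_def]
    using Suc.prems(1) pivot by (rule val_span_pivot_decomp)
  ultimately show ?case
    by blast
qed

end

theorem corollary3p14:
  fixes \<nu> :: "'k::field \<Rightarrow> 'g::linordered_ab_group_add ext"
    and S C :: "('k ^ 'n::finite) set"
  assumes "valuation \<nu>"
    and "finite S"
    and "C = vconv \<nu> S"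
    and "0 \<in> C"
  shows "\<exists>(F :: nat \<Rightarrow> ('k ^ 'n) set) (\<gamma> :: nat \<Rightarrow> 'g ext).
           (\<forall>i\<in>{1..CARD('n)}. vec.subspace (F i)) \<and>
           {0} \<subset> F 1 \<and>
           (\<forall>i. 1 \<le> i \<and> i < CARD('n) \<longrightarrow> F i \<subset> F (Suc i)) \<and>
           F CARD('n) = UNIV \<and>
           (\<forall>i. 1 \<le> i \<and> i < CARD('n) \<longrightarrow> \<gamma> i \<le> \<gamma> (Suc i)) \<and>
           C = {(\<Sum>i\<in>{1..CARD('n)}. v i) | v.
                  \<forall>i\<in>{1..CARD('n)}. v i \<in> F i \<and> \<gamma> i \<le> vec_val \<nu> (v i)}"
proof -
  interpret valued_field \<nu>
    using assms(1) by unfold_locales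
  define N where "N = CARD('n)"
  have "\<exists>f \<gamma>. vec.span (f ` {1..N}) = UNIV \<and> val_orthonormal \<nu> N f \<and> mono_on {1..N} \<gamma> \<and>
      val_span \<nu> S = graded_span \<nu> N f \<gamma>"
    using val_span_orthonormal_basis[OF assms(2), of UNIV N] by (auto simp: N_def)
  moreover have "C = val_span \<nu> S"
    using vconv_eq_val_span assms(3,4) by simp
  ultimately obtain f \<gamma> where span: "vec.span (f ` {1..N}) = UNIV" and orth: "val_orthonormal \<nu> N f"
    and mono: "mono_on {1..N} \<gamma>" and C: "C = graded_span \<nu> N f \<gamma>"
    by auto
  define F where "F i = vec.span (f ` {1..i})" for i
  have flag: "F i \<subset> F (Suc i)" if "i < N" for i
    unfolding F_def using orth that by (rule val_orthonormal_span_psubset)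
  have "{0} \<subset> F 1"
    using flag[of 0] by (simp add: F_def N_def)
  moreover have "\<gamma> i \<le> \<gamma> (Suc i)" if "1 \<le> i" "i < N" for i
    using mono that by (auto intro: mono_onD)
  ultimately show ?thesis
    unfolding N_def[symmetric]
    using flag span C graded_span_eq_flag_sums[OF orth mono]
    by (intro exI[of _ F] exI[of _ \<gamma>]) (auto simp: F_def vec.subspace_span)
qed

end
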